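(* Let $n,m\in\mathbb{N}$ and let $f:\mathbb{F}_2^n\to\mathbb{F}_2$ be $m$-bent. Run algorithm $\mathbb{A}^{(m)}(\mathrm{H}^{\otimes n})$ with $g=f$ and measure all $2n$ qubits. Then the probability of observing $\ket{0^n}\ket{0^n}$ is $2^{-n}$, and for every $\mathbf{x}\neq 0^n$ the probability of observing $\ket{\mathbf{x}}\ket{0^n}$ is $0$.
   Context: $\zeta_m=e^{2\pi i/m}$, $\overline{\zeta_m}$ its conjugate; $wt$ is Hamming weight; $\mathbf{x}\cdot\mathbf{y}=\bigoplus_i x_iy_i$. $f$ is $m$-bent if $|\mathcal{H}^{(m)}_f(\boldsymbol{\omega})|=1$ for all $\boldsymbol{\omega}$, where $\mathcal{H}^{(m)}_f(\boldsymbol{\omega})=2^{-n/2}\sum_{\mathbf{x}}(-1)^{f(\mathbf{x})\oplus\mathbf{x}\cdot\boldsymbol{\omega}}\zeta_m^{wt(\mathbf{x})}$. Gates: $\mathrm{H}$ Hadamard; $\Omega_m=\frac{1}{\sqrt2}\begin{pmatrix}1&\zeta_m\\1&-\zeta_m\end{pmatrix}$; $\overline{\Omega}_m=\frac{1}{\sqrt2}\begin{pmatrix}1&\overline{\zeta_m}\\1&-\overline{\zeta_m}\end{pmatrix}$; $U_f$ is the phase oracle $\ket{\mathbf{x}}\mapsto(-1)^{f(\mathbf{x})}\ket{\mathbf{x}}$. Algorithm $\mathbb{A}^{(m)}(\mathrm{C}_n)$ (with functions $f,g$): two $n$-qubit registers start in $\ket{0^n}\ket{0^n}$; apply $\mathrm{C}_n$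 to the first register; then apply to the second register in order $\mathrm{H}^{\otimes n}$, $U_f$, $\Omega_m^{\otimes n}$, then the two-register gate $\ket{\mathbf{y}}\ket{\mathbf{x}}\mapsto(-1)^{\mathbf{x}\cdot\mathbf{y}}\ket{\mathbf{y}}\ket{\mathbf{x}}$, then $\mathrm{H}^{\otimes n}$, $U_g$, $\overline{\Omega}_m^{\otimes n}$ on the second register; finally measure both registers. *)

theory Defs
  imports "HOL-Analysis.Analysis"
begin

text \<open>n-bit strings are boolean lists of length n (True = 1). A one-register state is a
  function from bit strings to complex amplitudes; a two-register state is curried:
  first register, then second register.\<close>

definition bitvecs :: "nat \<Rightarrow> bool list set" where
  "bitvecs n = {xs. length xs = n}"

definition zeros :: "nat \<Rightarrow> bool list" where
  "zeros n = replicate n False"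

definition wt :: "bool list \<Rightarrow> nat" where
  "wt xs = length (filter id xs)"

definition dotp :: "bool list \<Rightarrow> bool list \<Rightarrow> bool" where
  "dotp xs ys = odd (length (filter id (map2 (\<and>) xs ys)))"

definition sgn1 :: "bool \<Rightarrow> complex" where
  "sgn1 b = (if b then -1 else 1)"

definition zeta :: "nat \<Rightarrow> complex" where
  "zeta m = cis (2 * pi / real m)"

definition Hm :: "nat \<Rightarrow> nat \<Rightarrow> (bool list \<Rightarrow> bool) \<Rightarrow> bool list \<Rightarrow> complex" where
  "Hm n m f \<omega> = (1 / sqrt (2 ^ n)) *
     (\<Sum>x\<in>bitvecs n. sgn1 (f x \<noteq> dotp x \<omega>) * zeta m ^ wt x)"

definition m_bent :: "nat \<Rightarrow> nat \<Rightarrow> (bool list \<Rightarrow> bool) \<Rightarrow> bool" where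
  "m_bent n m f \<longleftrightarrow> (\<forall>\<omega>\<in>bitvecs n. cmod (Hm n m f \<omega>) = 1)"

text \<open>Single-qubit gates as matrices: entry (row, column), index False = 0, True = 1.\<close>
definition Hgate :: "bool \<Rightarrow> bool \<Rightarrow> complex" where
  "Hgate r c = (if r \<and> c then -1 else 1) / complex_of_real (sqrt 2)"

definition Omega :: "nat \<Rightarrow> bool \<Rightarrow> bool \<Rightarrow> complex" where
  "Omega m r c = (if c then (if r then - zeta m else zeta m) else 1) / complex_of_real (sqrt 2)"

definition Omegabar :: "nat \<Rightarrow> bool \<Rightarrow> bool \<Rightarrow> complex" where
  "Omegabar m r c = (if c then (if r then - cnj (zeta m) else cnj (zeta m)) else 1)
                     / complex_of_real (sqrt 2)"

definition tensor_gate :: "nat \<Rightarrow> (bool \<Rightarrow> bool \<Rightarrow> complex) \<Rightarrow>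
    (bool list \<Rightarrow> complex) \<Rightarrow> (bool list \<Rightarrow> complex)" where
  "tensor_gate n U \<psi> = (\<lambda>z. \<Sum>x\<in>bitvecs n. (\<Prod>i<n. U (z ! i) (x ! i)) * \<psi> x)"

definition phase_oracle :: "(bool list \<Rightarrow> bool) \<Rightarrow> (bool list \<Rightarrow> complex) \<Rightarrow> (bool list \<Rightarrow> complex)" where
  "phase_oracle f \<psi> = (\<lambda>x. sgn1 (f x) * \<psi> x)"

definition on_first :: "((bool list \<Rightarrow> complex) \<Rightarrow> (bool list \<Rightarrow> complex)) \<Rightarrow>
    (bool list \<Rightarrow> bool list \<Rightarrow> complex) \<Rightarrow> (bool list \<Rightarrow> bool list \<Rightarrow> complex)" where
  "on_first T \<Psi> = (\<lambda>y x. T (\<lambda>y'. \<Psi> y' x) y)"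

definition on_second :: "((bool list \<Rightarrow> complex) \<Rightarrow> (bool list \<Rightarrow> complex)) \<Rightarrow>
    (bool list \<Rightarrow> bool list \<Rightarrow> complex) \<Rightarrow> (bool list \<Rightarrow> bool list \<Rightarrow> complex)" where
  "on_second T \<Psi> = (\<lambda>y. T (\<Psi> y))"

definition cphase :: "(bool list \<Rightarrow> bool list \<Rightarrow> complex) \<Rightarrow> (bool list \<Rightarrow> bool list \<Rightarrow> complex)" where
  "cphase \<Psi> = (\<lambda>y x. sgn1 (dotp x y) * \<Psi> y x)"

definition alg_state :: "nat \<Rightarrow> nat \<Rightarrow> ((bool list \<Rightarrow> complex) \<Rightarrow> (bool list \<Rightarrow> complex)) \<Rightarrow>
    (bool list \<Rightarrow> bool) \<Rightarrow> (bool list \<Rightarrow> bool) \<Rightarrow> bool list \<Rightarrow> bool list \<Rightarrow> complex" where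
  "alg_state n m C f g =
     (let s0 = (\<lambda>y x. if y = zeros n \<and> x = zeros n then 1 else 0);
          s1 = on_first C s0;
          s2 = on_second (tensor_gate n Hgate) s1;
          s3 = on_second (phase_oracle f) s2;
          s4 = on_second (tensor_gate n (Omega m)) s3;
          s5 = cphase s4;
          s6 = on_second (tensor_gate n Hgate) s5;
          s7 = on_second (phase_oracle g) s6
      in on_second (tensor_gate n (Omegabar m)) s7)"

definition alg_prob :: "nat \<Rightarrow> nat \<Rightarrow> ((bool list \<Rightarrow> complex) \<Rightarrow> (bool list \<Rightarrow> complex)) \<Rightarrow>
    (bool list \<Rightarrow> bool) \<Rightarrow> (bool list \<Rightarrow> bool) \<Rightarrow> bool list \<Rightarrow> bool list \<Rightarrow> real" where
  "alg_prob n m C f g y x = (cmod (alg_state n m C f g y x))\<^sup>2"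

end

theory Submission
  imports Defs
begin

(* After the first H^n the first register is uniform and the second still |0^n>.  On the second
   register H^n, U_f and Omega_m produce the amplitudes Hm(w) up to a constant; the controlled
   phase multiplies them by (-1)^(w.y).  Projecting H^n, U_f, conj Omega_m onto |0^n> takes the
   inner product with Hm, so the amplitude of |y>|0^n> is proportional to
   sum_w (-1)^(w.y) |Hm(w)|^2, which for bent f is the character sum sum_w (-1)^(w.y) = 2^n [y = 0]. *)

lemma finite_bitvecs [simp]: "finite (bitvecs n)"
proof -
  have "bitvecs n = {xs. set xs \<subseteq> UNIV \<and> length xs = n}"
    by (auto simp: bitvecs_def)
  then show ?thesis
    using finite_lists_length_eq[of "UNIV :: bool set" n] by simp
qed

lemma length_zeros [simp]: "length (zeros n) = n"
  by (simp add: zeros_def)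

lemma nth_zeros [simp]: "i < n \<Longrightarrow> zeros n ! i = False"
  by (simp add: zeros_def)

lemma zeros_in_bitvecs [simp]: "zeros n \<in> bitvecs n"
  by (simp add: bitvecs_def)

lemma bitvecs_Suc: "bitvecs (Suc n) = Cons True ` bitvecs n \<union> Cons False ` bitvecs n"
proof (rule set_eqI)
  fix xs
  show "xs \<in> bitvecs (Suc n) \<longleftrightarrow> xs \<in> Cons True ` bitvecs n \<union> Cons False ` bitvecs n"
    by (cases xs) (auto simp: bitvecs_def)
qed

lemma sum_bitvecs_prod:
  fixes g :: "nat \<Rightarrow> bool \<Rightarrow> 'a::comm_semiring_1"
  shows "(\<Sum>w\<in>bitvecs n. \<Prod>i<n. g i (w ! i)) = (\<Prod>i<n. g i False + g i True)"
proof (induction n arbitrary: g)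
  case 0
  then show ?case by (simp add: bitvecs_def)
next
  case (Suc n)
  let ?P = "\<Prod>i<n. g (Suc i) False + g (Suc i) True"
  have "(\<Sum>w\<in>bitvecs (Suc n). \<Prod>i<Suc n. g i (w ! i))
      = (\<Sum>w\<in>bitvecs n. \<Prod>i<Suc n. g i ((True # w) ! i))
        + (\<Sum>w\<in>bitvecs n. \<Prod>i<Suc n. g i ((False # w) ! i))"
    unfolding bitvecs_Suc by (subst sum.union_disjoint) (auto simp: sum.reindex)
  also have "\<dots> = g 0 True * ?P + g 0 False * ?P"
    using Suc.IH[of "\<lambda>i. g (Suc i)"]
    by (simp only: prod.lessThan_Suc_shift nth_Cons_0 nth_Cons_Suc flip: sum_distrib_left)
  finally show ?case
    by (simp only: prod.lessThan_Suc_shift) (simp add: algebra_simps)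
qed

lemma dotp_Nil [simp]: "dotp [] y = False" "dotp x [] = False"
  by (simp_all add: dotp_def)

lemma dotp_Cons [simp]: "dotp (a # x) (b # y) = ((a \<and> b) \<noteq> dotp x y)"
  by (auto simp: dotp_def)

lemma dotp_commute: "dotp x y = dotp y x"
proof (induction x arbitrary: y)
  case Nil
  then show ?case by simp
next
  case (Cons a x)
  then show ?case by (cases y) auto
qed

lemma dotp_zeros [simp]: "dotp x (zeros n) = False" "dotp (zeros n) x = False"
proof -
  show "dotp x (zeros n) = False"
  proof (induction x arbitrary: n)
    case Nil
    then show ?case by simp
  next
    case (Cons a x)
    then show ?case by (cases n) (auto simp: zeros_def)
  qed
  then show "dotp (zeros n) x = False"
    by (simp add: dotp_commute)
qed

lemma sgn1_xor: "sgn1 (p \<noteq> q) = sgn1 p * sgn1 q"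
  by (simp add: sgn1_def)

lemma cnj_sgn1 [simp]: "cnj (sgn1 b) = sgn1 b"
  by (simp add: sgn1_def)

lemma sgn1_dotp_eq_prod:
  "length x = length y \<Longrightarrow> sgn1 (dotp x y) = (\<Prod>i<length x. if x ! i \<and> y ! i then -1 else 1)"
proof (induction x y rule: list_induct2)
  case Nil
  then show ?case by (simp add: sgn1_def)
next
  case (Cons a x b y)
  then show ?case
    by (simp only: length_Cons prod.lessThan_Suc_shift nth_Cons_0 nth_Cons_Suc dotp_Cons sgn1_xor)
       (simp add: sgn1_def)
qed

lemma power_wt_eq_prod: "z ^ wt x = (\<Prod>i<length x. if x ! i then z else 1)"
  by (induction x) (auto simp: wt_def prod.lessThan_Suc_shift simp del: prod.lessThan_Suc)

lemma sum_sgn1_dotp: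
  assumes "a \<in> bitvecs n"
  shows "(\<Sum>w\<in>bitvecs n. sgn1 (dotp w a)) = (if a = zeros n then 2 ^ n else 0)"
proof -
  have len: "length a = n"
    using assms by (simp add: bitvecs_def)
  have "(\<Sum>w\<in>bitvecs n. sgn1 (dotp w a))
      = (\<Sum>w\<in>bitvecs n. \<Prod>i<n. (\<lambda>i b. if b \<and> a ! i then -1 else 1 :: complex) i (w ! i))"
    by (rule sum.cong) (auto simp: sgn1_dotp_eq_prod len bitvecs_def)
  also have "\<dots> = (\<Prod>i<n. if a ! i then 0 else 2)"
    by (subst sum_bitvecs_prod) (rule prod.cong, auto)
  also have "\<dots> = (if a = zeros n then 2 ^ n else 0)"
  proof (cases "a = zeros n")
    case False
    then obtain i where "i < n" "a ! i"
      using len by (metis (full_types) length_replicate nth_equalityI nth_replicate zeros_def)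
    then show ?thesis
      using False by (auto intro: prod_zero)
  qed simp
  finally show ?thesis .
qed

definition inv_sqrt2 :: complex where
  "inv_sqrt2 = complex_of_real (1 / sqrt 2)"

lemma inv_sqrt2_power: "inv_sqrt2 ^ n = complex_of_real (1 / sqrt (2 ^ n))"
  by (simp add: inv_sqrt2_def real_sqrt_power power_divide)

lemma inv_sqrt2_power_square: "inv_sqrt2 ^ n * inv_sqrt2 ^ n * 2 ^ n = 1"
proof -
  have "inv_sqrt2 * inv_sqrt2 * 2 = 1"
    by (simp add: inv_sqrt2_def flip: of_real_mult)
  then show ?thesis
    by (metis power_mult_distrib power_one)
qed

definition phase_hadamard :: "complex \<Rightarrow> bool \<Rightarrow> bool \<Rightarrow> complex" where
  "phase_hadamard z r c = (if c then (if r then - z else z) else 1) / complex_of_real (sqrt 2)"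

lemma Hgate_eq_phase_hadamard: "Hgate = phase_hadamard 1"
  by (intro ext) (simp add: Hgate_def phase_hadamard_def)

lemma Omega_eq_phase_hadamard: "Omega m = phase_hadamard (zeta m)"
  by (intro ext) (simp add: Omega_def phase_hadamard_def)

lemma Omegabar_eq_phase_hadamard: "Omegabar m = phase_hadamard (cnj (zeta m))"
  by (intro ext) (simp add: Omegabar_def phase_hadamard_def)

lemma prod_phase_hadamard:
  assumes "length a = n" "length b = n"
  shows "(\<Prod>i<n. phase_hadamard z (a ! i) (b ! i)) = inv_sqrt2 ^ n * z ^ wt b * sgn1 (dotp a b)"
proof -
  have "(\<Prod>i<n. phase_hadamard z (a ! i) (b ! i))
      = (\<Prod>i<n. inv_sqrt2 * (if b ! i then z else 1) * (if a ! i \<and> b ! i then -1 else 1))"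
    by (rule prod.cong) (auto simp: phase_hadamard_def inv_sqrt2_def)
  then show ?thesis
    using assms by (simp add: prod.distrib sgn1_dotp_eq_prod power_wt_eq_prod)
qed

lemma tensor_gate_phase_hadamard:
  assumes "a \<in> bitvecs n"
  shows "tensor_gate n (phase_hadamard z) \<psi> a
       = inv_sqrt2 ^ n * (\<Sum>x\<in>bitvecs n. z ^ wt x * sgn1 (dotp a x) * \<psi> x)"
  unfolding tensor_gate_def sum_distrib_left
  by (rule sum.cong) (use assms in \<open>auto simp: prod_phase_hadamard bitvecs_def mult_ac\<close>)

lemma tensor_gate_Hgate_zeros:
  "tensor_gate n Hgate (\<lambda>x. if x = zeros n then c else 0) = (\<lambda>_. inv_sqrt2 ^ n * c)"
proof
  fix a
  have "(\<Prod>i<n. Hgate (a ! i) (zeros n ! i)) = inv_sqrt2 ^ n"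
    by (simp add: Hgate_def inv_sqrt2_def)
  then show "tensor_gate n Hgate (\<lambda>x. if x = zeros n then c else 0) a = inv_sqrt2 ^ n * c"
    unfolding tensor_gate_def by (simp add: if_distrib[of "\<lambda>t. _ * t"] cong: if_cong)
qed

lemma on_first_Hgate_basis_zeros:
  "on_first (tensor_gate n Hgate) (\<lambda>y x. if y = zeros n \<and> x = zeros n then 1 else 0) y
     = (\<lambda>x. if x = zeros n then inv_sqrt2 ^ n else 0)"
proof
  fix x
  show "on_first (tensor_gate n Hgate) (\<lambda>y x. if y = zeros n \<and> x = zeros n then 1 else 0) y x
      = (if x = zeros n then inv_sqrt2 ^ n else 0)"
    by (cases "x = zeros n")
       (simp add: on_first_def tensor_gate_Hgate_zeros[of n 1, simplified],
        simp add: on_first_def tensor_gate_def)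
qed

lemma Hm_eq_sum:
  "Hm n m f w = inv_sqrt2 ^ n * (\<Sum>x\<in>bitvecs n. zeta m ^ wt x * sgn1 (dotp w x) * sgn1 (f x))"
  unfolding Hm_def inv_sqrt2_power sgn1_xor
  by (simp add: dotp_commute mult_ac)

lemma tensor_gate_Omega_phase_oracle_const:
  assumes "w \<in> bitvecs n"
  shows "tensor_gate n (Omega m) (phase_oracle f (\<lambda>_. c)) w = c * Hm n m f w"
  unfolding Omega_eq_phase_hadamard tensor_gate_phase_hadamard[OF assms] Hm_eq_sum
    phase_oracle_def
  by (simp add: sum_distrib_left mult_ac)

lemma tensor_gate_Omegabar_phase_oracle_Hadamard_zeros:
  "tensor_gate n (Omegabar m) (phase_oracle f (tensor_gate n Hgate \<psi>)) (zeros n)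
     = inv_sqrt2 ^ n * (\<Sum>w\<in>bitvecs n. \<psi> w * cnj (Hm n m f w))"
proof -
  let ?B = "bitvecs n"
  have "tensor_gate n (Omegabar m) (phase_oracle f (tensor_gate n Hgate \<psi>)) (zeros n)
      = inv_sqrt2 ^ n * (\<Sum>x\<in>?B. cnj (zeta m) ^ wt x * sgn1 (f x) *
          (inv_sqrt2 ^ n * (\<Sum>w\<in>?B. sgn1 (dotp x w) * \<psi> w)))"
    unfolding Omegabar_eq_phase_hadamard Hgate_eq_phase_hadamard phase_oracle_def
      tensor_gate_phase_hadamard[OF zeros_in_bitvecs]
    by (intro arg_cong[where f = "\<lambda>s. inv_sqrt2 ^ n * s"] sum.cong refl)
       (simp add: tensor_gate_phase_hadamard bitvecs_def sgn1_def mult_ac)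
  also have "\<dots> = inv_sqrt2 ^ n * (\<Sum>x\<in>?B. \<Sum>w\<in>?B.
      \<psi> w * (inv_sqrt2 ^ n * (cnj (zeta m) ^ wt x * sgn1 (dotp w x) * sgn1 (f x))))"
    by (simp add: sum_distrib_left dotp_commute mult_ac)
  also have "\<dots> = inv_sqrt2 ^ n * (\<Sum>w\<in>?B. \<psi> w * cnj (Hm n m f w))"
    by (subst sum.swap) (simp add: Hm_eq_sum inv_sqrt2_def sum_distrib_left)
  finally show ?thesis .
qed

lemma alg_state_Hadamard_zeros:
  assumes "m_bent n m f" "y \<in> bitvecs n"
  shows "alg_state n m (tensor_gate n Hgate) f f y (zeros n)
           = (if y = zeros n then inv_sqrt2 ^ n else 0)"
proof -
  define c where "c = inv_sqrt2 ^ n * inv_sqrt2 ^ n"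
  have Hm_unimodular: "Hm n m f w * cnj (Hm n m f w) = 1" if "w \<in> bitvecs n" for w
    using assms(1) that complex_norm_square[of "Hm n m f w"] by (simp add: m_bent_def)
  have "alg_state n m (tensor_gate n Hgate) f f y (zeros n)
      = tensor_gate n (Omegabar m) (phase_oracle f (tensor_gate n Hgate
          (\<lambda>w. sgn1 (dotp w y) * tensor_gate n (Omega m) (phase_oracle f (\<lambda>_. c)) w))) (zeros n)"
    by (simp add: alg_state_def Let_def on_first_Hgate_basis_zeros on_second_def cphase_def c_def
        tensor_gate_Hgate_zeros)
  also have "\<dots> = inv_sqrt2 ^ n *
      (\<Sum>w\<in>bitvecs n. c * sgn1 (dotp w y) * (Hm n m f w * cnj (Hm n m f w)))"
    unfolding tensor_gate_Omegabar_phase_oracle_Hadamard_zeros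
    by (intro arg_cong[where f = "\<lambda>s. inv_sqrt2 ^ n * s"] sum.cong refl)
       (simp add: tensor_gate_Omega_phase_oracle_const mult_ac)
  also have "\<dots> = inv_sqrt2 ^ n * c * (\<Sum>w\<in>bitvecs n. sgn1 (dotp w y))"
    by (simp add: Hm_unimodular sum_distrib_left mult_ac)
  also have "\<dots> = (if y = zeros n then inv_sqrt2 ^ n else 0)"
    using inv_sqrt2_power_square by (simp add: sum_sgn1_dotp[OF assms(2)] c_def mult_ac)
  finally show ?thesis .
qed

theorem corollary4:
  fixes n m :: nat and f :: "bool list \<Rightarrow> bool"
  assumes "0 < m"
    and "m_bent n m f"
  shows "alg_prob n m (tensor_gate n Hgate) f f (zeros n) (zeros n) = 1 / 2 ^ n \<and>
         (\<forall>x\<in>bitvecs n. x \<noteq> zeros n \<longrightarrow>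
           alg_prob n m (tensor_gate n Hgate) f f x (zeros n) = 0)"
proof
  have "(cmod (inv_sqrt2 ^ n))\<^sup>2 = 1 / 2 ^ n"
    by (simp add: inv_sqrt2_power norm_divide power_divide)
  then show "alg_prob n m (tensor_gate n Hgate) f f (zeros n) (zeros n) = 1 / 2 ^ n"
    by (simp add: alg_prob_def alg_state_Hadamard_zeros[OF assms(2)])
  show "\<forall>x\<in>bitvecs n. x \<noteq> zeros n \<longrightarrow> alg_prob n m (tensor_gate n Hgate) f f x (zeros n) = 0"
    by (simp add: alg_prob_def alg_state_Hadamard_zeros[OF assms(2)])
qed

end
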